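(* Let $R$ be a ring with identity and involution $*$. The following conditions are equivalent: (1) $R$ is directly finite, i.e. for all $a,b\in R$, $ab=1$ implies $ba=1$; (2) for all $a,b\in R$: $aba=a$, $(ab)^*=ab$ and $ab^2=b$ hold if and only if $a$ is core invertible with $a^{\oplus}=b$.
   Context: An involution on $R$ satisfies $(a^* )^*=a$, $(ab)^*=b^*a^*$, $(a+b)^*=a^*+b^*$. An element $x\in R$ is a core inverse of $a$ if $axa=a$, $xR=aR$ and $Rx=Ra^*$; it is unique when it exists and is denoted $a^{\oplus}$. *)

theory Defs
  imports Main
begin

definition involution :: "('a::ring_1 \<Rightarrow> 'a) \<Rightarrow> bool" where
  "involution star \<longleftrightarrow>
     (\<forall>a. star (star a) = a) \<and>
     (\<forall>a b. star (a * b) = star b * star a) \<and>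
     (\<forall>a b. star (a + b) = star a + star b)"

definition right_ideal :: "'a::ring_1 \<Rightarrow> 'a set" where
  "right_ideal x = {x * r | r. True}"

definition left_ideal :: "'a::ring_1 \<Rightarrow> 'a set" where
  "left_ideal x = {r * x | r. True}"

definition core_inverse :: "('a::ring_1 \<Rightarrow> 'a) \<Rightarrow> 'a \<Rightarrow> 'a \<Rightarrow> bool" where
  "core_inverse star a x \<longleftrightarrow>
     a * x * a = a \<and> right_ideal x = right_ideal a \<and> left_ideal x = left_ideal (star a)"

definition directly_finite :: "'a::ring_1 itself \<Rightarrow> bool" where
  "directly_finite _ \<longleftrightarrow> (\<forall>a b :: 'a. a * b = 1 \<longrightarrow> b * a = 1)"

end

theory Submission
  imports Defs
begin

text \<open>
  The three equations already force \<open>b \<in> aR\<close> (from \<open>ab\<^sup>2 = b\<close>) and \<open>Ra\<^sup>* = Rb\<close>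
  (from \<open>aba = a\<close> and the symmetry of \<open>ab\<close>); what they miss in general is \<open>a \<in> bR\<close>.
  From \<open>aba = a\<close> and \<open>ab\<^sup>2 = b\<close> one checks that \<open>(a\<^sup>2b + 1 - ab)(bab + 1 - ab) = 1\<close>;
  in a directly finite ring the reversed product is \<open>1\<close> too, which yields \<open>ba\<^sup>2 = a\<close>.
  Conversely, if \<open>xy = 1\<close> then \<open>y\<close> satisfies the equations for \<open>x\<close>, so the
  characterisation gives \<open>x \<in> yR\<close>, say \<open>x = yt\<close>; then \<open>y(ty) = 1\<close> and
  \<open>ty = x(yty) = x\<close>, whence \<open>yx = 1\<close>.
\<close>

lemma involution_star_star: "involution star \<Longrightarrow> star (star a) = a"
  unfolding involution_def by blast

lemma involution_star_mult: "involution star \<Longrightarrow> star (a * b) = star b * star a"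
  unfolding involution_def by blast

lemma involution_star_one:
  assumes "involution star" shows "star (1::'a::ring_1) = 1"
proof -
  have "(1::'a) = star (star 1)" using involution_star_star[OF assms] by simp
  also have "\<dots> = star (1 * star 1)" by simp
  also have "\<dots> = star (star 1) * star 1" by (rule involution_star_mult[OF assms])
  also have "\<dots> = star 1" using involution_star_star[OF assms] by simp
  finally show ?thesis by simp
qed

lemma right_ideal_subset_iff: "right_ideal x \<subseteq> right_ideal y \<longleftrightarrow> (\<exists>r. x = y * r)"
proof
  assume "right_ideal x \<subseteq> right_ideal y"
  moreover have "x \<in> right_ideal x"
    unfolding right_ideal_def by (metis (mono_tags) mem_Collect_eq mult_1_right)
  ultimately show "\<exists>r. x = y * r" unfolding right_ideal_def by blast
next
  assume "\<exists>r. x = y * r"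
  then obtain r where "x = y * r" by blast
  then show "right_ideal x \<subseteq> right_ideal y"
    unfolding right_ideal_def by (auto simp: mult.assoc)
qed

lemma left_ideal_subset_iff: "left_ideal x \<subseteq> left_ideal y \<longleftrightarrow> (\<exists>r. x = r * y)"
proof
  assume "left_ideal x \<subseteq> left_ideal y"
  moreover have "x \<in> left_ideal x"
    unfolding left_ideal_def by (metis (mono_tags) mem_Collect_eq mult_1_left)
  ultimately show "\<exists>r. x = r * y" unfolding left_ideal_def by blast
next
  assume "\<exists>r. x = r * y"
  then obtain r where "x = r * y" by blast
  then show "left_ideal x \<subseteq> left_ideal y"
    unfolding left_ideal_def by (auto simp flip: mult.assoc)
qed

lemma right_ideal_eq_iff:
  "right_ideal x = right_ideal y \<longleftrightarrow> (\<exists>r. x = y * r) \<and> (\<exists>s. y = x * s)"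
  unfolding set_eq_subset right_ideal_subset_iff ..

lemma left_ideal_eq_iff:
  "left_ideal x = left_ideal y \<longleftrightarrow> (\<exists>r. x = r * y) \<and> (\<exists>s. y = s * x)"
  unfolding set_eq_subset left_ideal_subset_iff ..

lemma star_mult_self_absorb:
  assumes "involution star" and "a * b * a = a"
  shows "star a = star a * star (a * b)"
  using involution_star_mult[OF assms(1), of "a * b" a] assms(2) by simp

lemma core_inverse_imp_equations:
  fixes a b :: "'a::ring_1"
  assumes inv: "involution star" and core: "core_inverse star a b"
  shows "a * b * a = a \<and> star (a * b) = a * b \<and> a * b ^ 2 = b"
proof -
  have aba: "a * b * a = a" using core unfolding core_inverse_def by simp
  obtain t where t: "b = a * t"
    using core unfolding core_inverse_def right_ideal_eq_iff by blast
  obtain s where s: "b = s * star a"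
    using core unfolding core_inverse_def left_ideal_eq_iff by blast
  have "b = s * star a" by (rule s)
  also have "\<dots> = s * (star a * star (a * b))"
    using star_mult_self_absorb[OF inv aba] by (rule arg_cong)
  also have "\<dots> = b * star (a * b)"
    unfolding s by (simp only: mult.assoc)
  finally have b_absorb: "b = b * star (a * b)" .
  then have ab_absorb: "a * b = a * b * star (a * b)"
    by (metis mult.assoc)
  have "star (a * b) = star (a * b * star (a * b))"
    using ab_absorb by simp
  also have "\<dots> = a * b * star (a * b)"
    by (simp add: involution_star_mult[OF inv] involution_star_star[OF inv])
  also have "\<dots> = a * b"
    using ab_absorb by simp
  finally have "star (a * b) = a * b" .
  moreover have "a * b ^ 2 = b"
  proof -
    have "a * b ^ 2 = (a * b * a) * t"
      using t by (simp add: power2_eq_square mult.assoc)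
    then show ?thesis using aba t by simp
  qed
  ultimately show ?thesis using aba by simp
qed

lemma core_equations_product_identities:
  fixes a b :: "'a::ring_1"
  assumes "a * b * a = a" and "a * b ^ 2 = b"
  shows "(a * (a * b) + 1 - a * b) * (b * (a * b) + 1 - a * b) = 1"
    and "(b * (a * b) + 1 - a * b) * (a * (a * b) + 1 - a * b) = b * (a * (a * b)) + 1 - a * b"
proof -
  have aba: "\<And>z. a * (b * (a * z)) = a * z" and abb: "\<And>z. a * (b * (b * z)) = b * z"
    using assms by (metis mult.assoc mult_1_right power2_eq_square)+
  have aba': "a * (b * a) = a" and abb': "a * (b * b) = b"
    using aba[of 1] abb[of 1] by simp_all
  show "(a * (a * b) + 1 - a * b) * (b * (a * b) + 1 - a * b) = 1"
       "(b * (a * b) + 1 - a * b) * (a * (a * b) + 1 - a * b) = b * (a * (a * b)) + 1 - a * b"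
    by (simp_all add: algebra_simps aba abb aba' abb')
qed

lemma directly_finite_square_absorb:
  fixes a b :: "'a::ring_1"
  assumes df: "directly_finite TYPE('a)" and aba: "a * b * a = a" and abb: "a * b ^ 2 = b"
  shows "b * (a * a) = a"
proof -
  have "(b * (a * b) + 1 - a * b) * (a * (a * b) + 1 - a * b) = 1"
    using core_equations_product_identities(1)[OF aba abb] df unfolding directly_finite_def by blast
  then have "b * (a * (a * b)) + 1 - a * b = 1"
    using core_equations_product_identities(2)[OF aba abb] by simp
  then have ba2b: "b * (a * (a * b)) = a * b" by (simp add: algebra_simps)
  have "b * (a * a) = b * (a * (a * b * a))"
    using aba by simp
  also have "\<dots> = b * (a * (a * b)) * a"
    by (simp only: mult.assoc)
  also have "\<dots> = a" using ba2b aba by simp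
  finally show ?thesis .
qed

lemma equations_imp_core_inverse:
  fixes a b :: "'a::ring_1"
  assumes inv: "involution star" and df: "directly_finite TYPE('a)"
    and aba: "a * b * a = a" and sym: "star (a * b) = a * b" and abb: "a * b ^ 2 = b"
  shows "core_inverse star a b"
proof -
  have ba2: "b * (a * a) = a" by (rule directly_finite_square_absorb[OF df aba abb])
  have b_eq: "b = a * (b * b)" using abb by (simp add: power2_eq_square mult.assoc)
  have "b * a * b = b"
    by (metis b_eq ba2 mult.assoc)
  then have "b = (b * star b) * star a"
    using sym involution_star_mult[OF inv, of a b] by (simp add: mult.assoc)
  moreover have "star a = (star a * a) * b"
    using star_mult_self_absorb[OF inv aba] unfolding sym by (simp only: mult.assoc)
  ultimately have "left_ideal b = left_ideal (star a)"
    unfolding left_ideal_eq_iff by blast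
  moreover have "right_ideal b = right_ideal a"
    unfolding right_ideal_eq_iff using b_eq ba2[symmetric] by blast
  ultimately show ?thesis unfolding core_inverse_def using aba by simp
qed

lemma core_characterisation_imp_directly_finite:
  fixes star :: "'a::ring_1 \<Rightarrow> 'a"
  assumes inv: "involution star"
    and char: "\<And>a b :: 'a. a * b * a = a \<and> star (a * b) = a * b \<and> a * b ^ 2 = b
                 \<Longrightarrow> core_inverse star a b"
  shows "directly_finite TYPE('a)"
  unfolding directly_finite_def
proof (intro allI impI)
  fix x y :: 'a assume xy: "x * y = 1"
  have "x * y * x = x" and "star (x * y) = x * y" and "x * y ^ 2 = y"
    using xy involution_star_one[OF inv] by (simp_all add: power2_eq_square flip: mult.assoc)
  then have "core_inverse star x y" using char by blast
  then obtain t where t: "x = y * t"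
    unfolding core_inverse_def right_ideal_eq_iff by blast
  have yty: "y * (t * y) = 1" using xy t by (simp add: mult.assoc)
  have "x = x * (y * (t * y))" using yty by simp
  also have "\<dots> = t * y" using xy by (metis mult.assoc mult_1_left)
  finally show "y * x = 1" using yty by simp
qed

theorem theorem3p9:
  fixes star :: "'a::ring_1 \<Rightarrow> 'a"
  assumes "involution star"
  shows "directly_finite TYPE('a) \<longleftrightarrow>
    (\<forall>a b :: 'a. (a * b * a = a \<and> star (a * b) = a * b \<and> a * b ^ 2 = b)
                  \<longleftrightarrow> core_inverse star a b)"
  using equations_imp_core_inverse[OF assms] core_inverse_imp_equations[OF assms]
    core_characterisation_imp_directly_finite[OF assms]
  by blast

end
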